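(* Let $\mathbb{H}$ be an infinite-dimensional separable real or complex Hilbert space, and let $P$ be a state on $L(\mathbb{H})$. If $x,y$ are atoms of $L(\mathbb{H})$ with $P(x)=1$ and $P(y)=0$, then $x\perp y$, and there is an atom $z\le x\vee y$ with $P(z)=\tfrac12$.
   Context: $L(\mathbb{H})$ denotes the lattice of closed subspaces of $\mathbb{H}$, ordered by inclusion; its atoms are the one-dimensional subspaces (rays), and $x\vee y$ is the closed span of $x$ and $y$. A state on $L(\mathbb{H})$ is a function $P$ from the atoms of $L(\mathbb{H})$ to $[0,\infty)$ such that $\sum_{j}P(x_j)=1$ for every maximal family $\{x_j\}$ of pairwise orthogonal atoms (i.e. for the rays spanned by any orthonormal basis). *)

theory Defs
  imports "HOL-Analysis.Analysis"
begin

text \<open>A complex Hilbert space is modelled as a real Hilbert space (the realification,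
with real inner product Re of the complex one) together with an orthogonal complex
structure J (multiplication by i). Complex-linear closed subspaces are exactly the
J-invariant closed real subspaces.\<close>

definition complex_structure :: "('a::real_inner \<Rightarrow> 'a) \<Rightarrow> bool" where
  "complex_structure J \<longleftrightarrow> linear J \<and> (\<forall>x. J (J x) = - x) \<and> (\<forall>x y. J x \<bullet> J y = x \<bullet> y)"

definition real_atoms :: "'a::real_inner set set" where
  "real_atoms = {span {v} | v. v \<noteq> 0}"

text \<open>Atoms of L(H) for a complex Hilbert space with complex structure J:
complex one-dimensional subspaces  C v = span_R {v, J v}.\<close>
definition complex_atoms :: "('a::real_inner \<Rightarrow> 'a) \<Rightarrow> 'a set set" where
  "complex_atoms J = {span {v, J v} | v. v \<noteq> 0}"

definition orth_sub :: "'a::real_inner set \<Rightarrow> 'a set \<Rightarrow> bool" where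
  "orth_sub x y \<longleftrightarrow> (\<forall>u\<in>x. \<forall>w\<in>y. u \<bullet> w = 0)"

definition join_sub :: "'a::real_normed_vector set \<Rightarrow> 'a set \<Rightarrow> 'a set" where
  "join_sub x y = closure (span (x \<union> y))"

definition max_orth_family :: "'a::real_inner set set \<Rightarrow> 'a set set \<Rightarrow> bool" where
  "max_orth_family A F \<longleftrightarrow> F \<subseteq> A \<and>
     (\<forall>x\<in>F. \<forall>y\<in>F. x \<noteq> y \<longrightarrow> orth_sub x y) \<and>
     \<not> (\<exists>z\<in>A. z \<notin> F \<and> (\<forall>x\<in>F. orth_sub z x))"

definition is_state :: "'a::real_inner set set \<Rightarrow> ('a set \<Rightarrow> real) \<Rightarrow> bool" where
  "is_state A P \<longleftrightarrow> (\<forall>x\<in>A. P x \<ge> 0) \<and> (\<forall>F. max_orth_family A F \<longrightarrow> (P has_sum 1) F)"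

end

theory Submission
  imports Defs
begin

text \<open>Let \<open>J\<close> be the identity of a real space and multiplication by \<open>\<i>\<close> of a complex one, so that
  atoms are spans of \<open>{v, J v}\<close>, and let \<open>x\<close> be spanned by \<open>{n, J n}\<close> with \<open>n\<close> a unit vector.
  For a unit vector \<open>e\<close> orthogonal to \<open>n\<close> and \<open>J n\<close>, infinite dimension provides a third unit
  vector \<open>f\<close> such that \<open>n, e, f\<close> span a totally real copy of \<open>\<real>\<^sup>3\<close>; on the atoms generated
  by its lines, \<open>P\<close> is a frame function with value \<open>1\<close> at \<open>n\<close>. In the chart \<open>Q \<mapsto> (1, Q)\<close>,
  \<open>Q \<in> \<complex>\<close>, orthogonal triples yield two functional equations. They show that the chart
  function is non-increasing in \<open>\<bar>Q\<bar>\<close>, equals \<open>1/2\<close> on the unit circle, and is positive,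
  because a zero would spread, by repeatedly halving the radius, to the unit circle.
  An atom \<open>y\<close> not orthogonal to \<open>x\<close> is the line through some \<open>(1, r)\<close> of such a copy, so
  \<open>P y > 0\<close>; if \<open>y \<perp> x\<close>, the line through \<open>n + e\<close> with \<open>e \<in> y\<close> has \<open>P = 1/2\<close>.\<close>

lemma cos_ge_one_minus_square_half: "1 - x\<^sup>2 / 2 \<le> cos (x::real)"
proof -
  have "\<bar>sin (x/2)\<bar> \<le> \<bar>x/2\<bar>"
    by (rule abs_sin_x_le_abs_x)
  then have "sin (x/2) ^ 2 \<le> (x/2) ^ 2"
    by (metis abs_le_square_iff)
  moreover have "cos x = 1 - 2 * sin (x/2) ^ 2"
    using cos_double_sin[of "x/2"] by simp
  ultimately show ?thesis
    by (simp add: power_divide)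
qed

lemma cos_power_ge:
  assumes "\<bar>x\<bar> \<le> 1"
  shows "1 - real k * x\<^sup>2 / 2 \<le> cos x ^ k"
proof -
  have x2: "x\<^sup>2 \<le> 1"
    using abs_le_square_iff[of x 1] assms by simp
  have "1 + real k * (- (x\<^sup>2 / 2)) \<le> (1 + (- (x\<^sup>2 / 2))) ^ k"
    by (rule Bernoulli_inequality) (use x2 in simp)
  also have "\<dots> \<le> cos x ^ k"
    by (rule power_mono) (use cos_ge_one_minus_square_half[of x] x2 in auto)
  finally show ?thesis
    by simp
qed

lemma cmod_one_plus_i [simp]: "cmod (1 + \<i> * of_real r) = sqrt (1 + r\<^sup>2)"
  by (simp add: cmod_def power2_eq_square)

lemma cmod_one_minus_i [simp]: "cmod (1 - \<i> * of_real r) = sqrt (1 + r\<^sup>2)"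
  by (simp add: cmod_def power2_eq_square)

lemma norm_mult_one_plus_i_less:
  assumes "cmod Z = cmod Z'" and "Z \<noteq> 0" and "r\<^sup>2 < r'\<^sup>2"
  shows "cmod (Z * (1 + \<i> * of_real r)) < cmod (Z' * (1 + \<i> * of_real r'))"
    and "cmod (Z * (1 - \<i> * of_real r)) < cmod (Z' * (1 - \<i> * of_real r'))"
proof -
  have "cmod Z * sqrt (1 + r\<^sup>2) < cmod Z' * sqrt (1 + r'\<^sup>2)"
    unfolding assms(1)[symmetric] using assms(2,3) by (intro mult_strict_left_mono) auto
  then show "cmod (Z * (1 + \<i> * of_real r)) < cmod (Z' * (1 + \<i> * of_real r'))"
    and "cmod (Z * (1 - \<i> * of_real r)) < cmod (Z' * (1 - \<i> * of_real r'))"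
    by (simp_all only: norm_mult cmod_one_plus_i cmod_one_minus_i)
qed

lemma factor_one_plus_i:
  assumes "1 \<le> Re W"
  obtains t s :: real where "W = (1 + \<i> * of_real t) * (1 + \<i> * of_real s)"
proof -
  define a b where "a = Re W" and "b = Im W"
  define t where "t = (b + sqrt (b\<^sup>2 + 4 * (a - 1))) / 2"
  have "(sqrt (b\<^sup>2 + 4 * (a - 1)))\<^sup>2 = b\<^sup>2 + 4 * (a - 1)"
    using assms a_def by (intro real_sqrt_pow2) (smt (verit) zero_le_power2)
  then have "t\<^sup>2 - b * t + 1 - a = 0"
    unfolding t_def by (simp add: power2_eq_square field_simps)
  then have "W = (1 + \<i> * of_real t) * (1 + \<i> * of_real (b - t))"
    by (simp add: complex_eq_iff a_def b_def power2_eq_square algebra_simps)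
  then show ?thesis
    by (rule that)
qed

lemma cos_div_power_ge:
  assumes "1 < \<mu>" and "\<bar>\<theta>\<bar> \<le> pi"
  obtains k :: nat where "0 < k" and "0 < cos (\<theta> / k)" and "1 \<le> \<mu> * cos (\<theta> / k) ^ k"
proof -
  define k :: nat where "k = max 4 (nat \<lceil>8 * \<mu> / (\<mu> - 1)\<rceil>)"
  have k4: "4 \<le> k"
    unfolding k_def by simp
  have k_ge: "8 * \<mu> / (\<mu> - 1) \<le> real k"
    unfolding k_def by linarith
  define D where "D = \<theta> / real k"
  have D_le: "\<bar>D\<bar> \<le> pi / 4"
  proof -
    have "\<bar>D\<bar> \<le> pi / real k"
      unfolding D_def using assms(2) k4 by (simp add: divide_right_mono)
    also have "\<dots> \<le> pi / 4"
      using k4 pi_gt_zero by (intro divide_left_mono) auto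
    finally show ?thesis .
  qed
  then have "0 < cos D"
    using pi_gt_zero abs_ge_self[of D] abs_ge_minus_self[of D] by (intro cos_gt_zero_pi) linarith+
  have "real k * D\<^sup>2 / 2 = \<theta>\<^sup>2 / (2 * real k)"
    unfolding D_def using k4 by (simp add: power2_eq_square)
  also have "\<dots> \<le> 16 / (2 * real k)"
  proof (rule divide_right_mono)
    have "\<bar>\<theta>\<bar>\<^sup>2 \<le> 4\<^sup>2"
      using assms(2) pi_less_4 by (intro power_mono) auto
    then show "\<theta>\<^sup>2 \<le> 16"
      by simp
  qed simp
  also have "\<dots> \<le> (\<mu> - 1) / \<mu>"
  proof -
    have "8 * \<mu> \<le> real k * (\<mu> - 1)"
      using k_ge assms(1) by (simp add: divide_le_eq)
    then show ?thesis
      using assms(1) k4 by (simp add: divide_le_eq le_divide_eq mult.commute)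
  qed
  finally have "1 - (\<mu> - 1) / \<mu> \<le> cos D ^ k"
    using cos_power_ge[of D k] D_le pi_less_4 by linarith
  then have "1 \<le> \<mu> * cos D ^ k"
    using assms(1) by (simp add: field_simps)
  with k4 \<open>0 < cos D\<close> show ?thesis
    unfolding D_def by (intro that) simp_all
qed

text \<open>Since \<open>1 + \<i> tan D = cis D / cos D\<close>, a rotation by \<open>\<theta>\<close> is a power of \<open>1 + \<i> t\<close>
  up to the factor \<open>cos (\<theta>/k) ^ k\<close>, which tends to \<open>1\<close>.\<close>

lemma cis_eq_power_one_plus_i:
  assumes "1 < \<mu>" and "\<bar>\<theta>\<bar> \<le> pi"
  obtains t C :: real and k :: nat
  where "0 < C" and "1 \<le> \<mu> * C" and "(1 + \<i> * t) ^ k = cis \<theta> / C"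
proof -
  obtain k :: nat where "0 < k" and cos_pos: "0 < cos (\<theta> / k)" and "1 \<le> \<mu> * cos (\<theta> / k) ^ k"
    using cos_div_power_ge[OF assms] .
  moreover have "1 + \<i> * tan (\<theta> / k) = cis (\<theta> / k) / cos (\<theta> / k)"
    using cos_pos by (simp add: complex_eq_iff tan_def)
  then have "(1 + \<i> * tan (\<theta> / k)) ^ k = cis (real k * (\<theta> / k)) / cos (\<theta> / k) ^ k"
    by (simp only: power_divide Complex.DeMoivre of_real_power)
  ultimately show ?thesis
    using that[of "cos (\<theta> / k) ^ k" "tan (\<theta> / k)" k] by simp
qed

lemma exists_power_one_plus_i_Re_ge:
  assumes "Q \<noteq> 0" and "cmod Q < cmod W"
  obtains t k where "(cmod (Q * (1 + \<i> * of_real t) ^ k))\<^sup>2 \<le> Re (W * cnj (Q * (1 + \<i> * of_real t) ^ k))"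
proof -
  define \<mu> \<theta> where "\<mu> = cmod (W / Q)" and "\<theta> = Arg (W / Q)"
  have "1 < \<mu>"
    using assms by (simp add: \<mu>_def norm_divide)
  moreover have "\<bar>\<theta>\<bar> \<le> pi"
    using Arg_bounded[of "W / Q"] unfolding \<theta>_def by auto
  ultimately obtain t C k where C: "0 < C" "1 \<le> \<mu> * C"
    and power: "(1 + \<i> * of_real t) ^ k = cis \<theta> / of_real C"
    by (rule cis_eq_power_one_plus_i)
  define Q' where "Q' = Q * (1 + \<i> * of_real t) ^ k"
  have "W / Q = of_real \<mu> * cis \<theta>"
    unfolding \<mu>_def \<theta>_def by (metis rcis_cmod_Arg rcis_def)
  then have W: "W = Q * of_real \<mu> * cis \<theta>"
    using assms(1) by (simp add: field_simps)
  have "cis \<theta> * cnj (cis \<theta>) = 1"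
    by (simp add: complex_eq_iff power2_eq_square[symmetric])
  moreover have "W * cnj Q' = (Q * cnj Q) * of_real \<mu> * (cis \<theta> * cnj (cis \<theta>)) / of_real C"
    unfolding Q'_def power W by (simp add: field_simps)
  ultimately have "Re (W * cnj Q') = (cmod Q)\<^sup>2 * \<mu> / C"
    by (simp add: complex_mult_cnj cmod_power2)
  moreover have "(cmod Q')\<^sup>2 = (cmod Q)\<^sup>2 / C\<^sup>2"
    unfolding Q'_def power using C by (simp add: norm_mult norm_divide power_divide)
  moreover have "(cmod Q)\<^sup>2 * 1 \<le> (cmod Q)\<^sup>2 * (\<mu> * C)"
    using C by (intro mult_left_mono) auto
  then have "(cmod Q)\<^sup>2 / C\<^sup>2 \<le> (cmod Q)\<^sup>2 * \<mu> / C"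
    using C by (simp add: field_simps power2_eq_square)
  ultimately show ?thesis
    using that[of t k] unfolding Q'_def by simp
qed

text \<open>\<open>F Q\<close> stands for the value of a frame function on \<open>\<real> \<times> \<complex> \<cong> \<real>\<^sup>3\<close> at the line through
  \<open>(1, Q)\<close>, normalised to \<open>1\<close> at \<open>(1, 0)\<close>. The lines through \<open>(1, Z)\<close> and \<open>(1, -Z/\<bar>Z\<bar>\<^sup>2)\<close>
  complete \<open>(0, \<i> Z)\<close>, where \<open>F\<close> vanishes, to an orthogonal triple; the lines through
  \<open>(1, Q (1 + \<i> t))\<close> and \<open>(1, Q (1 - \<i> u))\<close> complete \<open>(1, -Q/\<bar>Q\<bar>\<^sup>2)\<close>.\<close>

locale projective_frame_chart =
  fixes F :: "complex \<Rightarrow> real"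
  assumes nonneg: "0 \<le> F Q"
    and origin: "F 0 = 1"
    and polar: "Z \<noteq> 0 \<Longrightarrow> F Z + F (- Z /\<^sub>R (cmod Z)\<^sup>2) = 1"
    and split: "t * u * (cmod Q)\<^sup>2 = 1 + (cmod Q)\<^sup>2 \<Longrightarrow>
      F Q = F (Q * (1 + \<i> * of_real t)) + F (Q * (1 - \<i> * of_real u))"
begin

lemma le_one: "F Q \<le> 1"
proof (cases "Q = 0")
  case False
  then show ?thesis
    using polar[OF False] nonneg[of "- Q /\<^sub>R (cmod Q)\<^sup>2"] by linarith
qed (simp add: origin)

lemma polar_unit_circle:
  assumes "cmod Z = 1"
  shows "F (- Z) = 1 - F Z"
proof -
  have "Z \<noteq> 0"
    using assms by auto
  then show ?thesis
    using polar[of Z] assms by simp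
qed

lemma mult_one_plus_i_le: "F (Q * (1 + \<i> * of_real t)) \<le> F Q"
proof (cases "Q = 0 \<or> t = 0")
  case False
  define u where "u = (1 + (cmod Q)\<^sup>2) / (t * (cmod Q)\<^sup>2)"
  have "t * u * (cmod Q)\<^sup>2 = 1 + (cmod Q)\<^sup>2"
    using False unfolding u_def by simp
  from split[OF this] show ?thesis
    using nonneg[of "Q * (1 - \<i> * of_real u)"] by linarith
qed auto

lemma mult_power_one_plus_i_le: "F (Q * (1 + \<i> * of_real t) ^ k) \<le> F Q"
proof (induction k)
  case (Suc k)
  have "F (Q * (1 + \<i> * of_real t) ^ Suc k) = F (Q * (1 + \<i> * of_real t) ^ k * (1 + \<i> * of_real t))"
    by (simp add: ac_simps)
  also have "\<dots> \<le> F (Q * (1 + \<i> * of_real t) ^ k)"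
    by (rule mult_one_plus_i_le)
  finally show ?case
    using Suc.IH by simp
qed simp

lemma le_if_Re_ge:
  assumes "(cmod Q)\<^sup>2 \<le> Re (W * cnj Q)"
  shows "F W \<le> F Q"
proof (cases "Q = 0")
  case True
  then show ?thesis
    using le_one origin by simp
next
  case False
  have "Re (W * cnj Q) = (cmod Q)\<^sup>2 * Re (W / Q)"
    using False by (simp add: complex_div_cnj[of W Q] cmod_power2 power2_eq_square)
  then have "1 \<le> Re (W / Q)"
    using assms False by (simp add: mult_le_cancel_left1)
  then obtain t s where "W / Q = (1 + \<i> * of_real t) * (1 + \<i> * of_real s)"
    by (rule factor_one_plus_i)
  then have "W = Q * (1 + \<i> * of_real t) * (1 + \<i> * of_real s)"
    using False by (simp add: field_simps)
  then have "F W \<le> F (Q * (1 + \<i> * of_real t))"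
    using mult_one_plus_i_le by simp
  also have "\<dots> \<le> F Q"
    by (rule mult_one_plus_i_le)
  finally show ?thesis .
qed

lemma antimono_norm:
  assumes "cmod Q < cmod W"
  shows "F W \<le> F Q"
proof (cases "Q = 0")
  case True
  then show ?thesis
    using le_one origin by simp
next
  case False
  then obtain t k where "(cmod (Q * (1 + \<i> * of_real t) ^ k))\<^sup>2 \<le> Re (W * cnj (Q * (1 + \<i> * of_real t) ^ k))"
    using assms by (rule exists_power_one_plus_i_Re_ge)
  then have "F W \<le> F (Q * (1 + \<i> * of_real t) ^ k)"
    by (rule le_if_Re_ge)
  also have "\<dots> \<le> F Q"
    by (rule mult_power_one_plus_i_le)
  finally show ?thesis .
qed

lemma unit_split_gap:
  assumes "cmod Z = 1" and "0 < t" and "t < s"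
  shows "2 * F Z - 1 + F (- Z * (1 + \<i> * of_real s)) \<le> F (Z * (1 + \<i> * of_real t))"
proof -
  have "t * (2 / t) * (cmod Z)\<^sup>2 = 1 + (cmod Z)\<^sup>2" "s * (2 / s) * (cmod (- Z))\<^sup>2 = 1 + (cmod (- Z))\<^sup>2"
    using assms by auto
  note split[OF this(1)] split[OF this(2)]
  moreover have "(2 / s)\<^sup>2 < (2 / t)\<^sup>2"
    using assms by (intro power_strict_mono frac_less2) auto
  then have "cmod (- Z * (1 - \<i> * of_real (2 / s))) < cmod (Z * (1 - \<i> * of_real (2 / t)))"
    using assms(1) by (intro norm_mult_one_plus_i_less) auto
  then have "F (Z * (1 - \<i> * of_real (2 / t))) \<le> F (- Z * (1 - \<i> * of_real (2 / s)))"
    by (rule antimono_norm)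
  ultimately show ?thesis
    using polar_unit_circle[OF assms(1)] by linarith
qed

lemma unit_circle_le_half:
  assumes Z: "cmod Z = 1"
  shows "F Z \<le> 1 / 2"
proof (rule ccontr)
  assume "\<not> F Z \<le> 1 / 2"
  then have \<delta>: "0 < 2 * F Z - 1"
    by simp
  define a where "a j = F (Z * (1 + \<i> * of_real (2 * real j + 1)))" for j :: nat
  have step: "a (Suc j) + (2 * F Z - 1) \<le> a j" for j
  proof -
    have "2 * F Z - 1 + F (- Z * (1 + \<i> * of_real (2 * real j + 2))) \<le> a j"
      unfolding a_def using Z by (intro unit_split_gap) auto
    moreover have "a (Suc j) \<le> F (- Z * (1 + \<i> * of_real (2 * real j + 2)))"
      unfolding a_def using Z by (intro antimono_norm norm_mult_one_plus_i_less) (auto intro: power_strict_mono)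
    ultimately show ?thesis
      by linarith
  qed
  have telescope: "a n + real n * (2 * F Z - 1) \<le> a 0" for n
  proof (induction n)
    case (Suc n)
    then show ?case
      using step[of n] by (simp add: algebra_simps)
  qed simp
  obtain n :: nat where "1 < real n * (2 * F Z - 1)"
    using reals_Archimedean3[OF \<delta>] by blast
  moreover have "0 \<le> a n" "a 0 \<le> 1"
    unfolding a_def by (rule nonneg, rule le_one)
  ultimately show False
    using telescope[of n] by linarith
qed

lemma unit_circle_eq_half:
  assumes "cmod Z = 1"
  shows "F Z = 1 / 2"
  using unit_circle_le_half[OF assms] unit_circle_le_half[of "- Z"] polar_unit_circle[OF assms] assms by simp

text \<open>Split with \<open>t = u\<close>: both parts then have squared modulus \<open>2 \<bar>Q\<bar>\<^sup>2 + 1\<close>.\<close>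

lemma zero_outside_halved:
  assumes zero: "\<And>W. \<sigma> < (cmod W)\<^sup>2 \<Longrightarrow> F W = 0" and "0 \<le> \<sigma>" and Q: "\<sigma> / 2 < (cmod Q)\<^sup>2"
  shows "F Q = 0"
proof -
  define \<rho> where "\<rho> = (cmod Q)\<^sup>2"
  have "0 < \<rho>"
    using Q assms(2) \<rho>_def by linarith
  define t where "t = sqrt ((1 + \<rho>) / \<rho>)"
  have t2: "t\<^sup>2 = (1 + \<rho>) / \<rho>"
    unfolding t_def using \<open>0 < \<rho>\<close> by simp
  then have "t * t * \<rho> = 1 + \<rho>"
    using \<open>0 < \<rho>\<close> by (simp add: power2_eq_square field_simps)
  note split[OF this[unfolded \<rho>_def]]
  moreover have "(cmod Q * sqrt (1 + t\<^sup>2))\<^sup>2 = 2 * \<rho> + 1"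
    using t2 \<open>0 < \<rho>\<close> unfolding power_mult_distrib \<rho>_def by (simp add: field_simps)
  then have "(cmod (Q * (1 + \<i> * of_real t)))\<^sup>2 = 2 * \<rho> + 1"
    "(cmod (Q * (1 - \<i> * of_real t)))\<^sup>2 = 2 * \<rho> + 1"
    by (simp_all only: norm_mult cmod_one_plus_i cmod_one_minus_i)
  then have "F (Q * (1 + \<i> * of_real t)) = 0" "F (Q * (1 - \<i> * of_real t)) = 0"
    using zero Q \<rho>_def by auto
  ultimately show ?thesis
    by simp
qed

lemma positive: "0 < F Q"
proof (rule ccontr)
  assume "\<not> 0 < F Q"
  then have "F Q = 0"
    using nonneg[of Q] by simp
  then have base: "F W = 0" if "(cmod Q)\<^sup>2 < (cmod W)\<^sup>2" for W
    using antimono_norm[of Q W] nonneg[of W] that by (simp add: power_less_imp_less_base)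
  have "F W = 0" if "(cmod Q)\<^sup>2 / 2 ^ n < (cmod W)\<^sup>2" for n W
    using that
  proof (induction n arbitrary: W)
    case (Suc n)
    show ?case
      by (rule zero_outside_halved[of "(cmod Q)\<^sup>2 / 2 ^ n"]) (use Suc in auto)
  qed (simp add: base)
  moreover obtain n :: nat where "(cmod Q)\<^sup>2 < 2 ^ n"
    using real_arch_pow[of 2 "(cmod Q)\<^sup>2"] by auto
  ultimately have "F 1 = 0"
    by simp
  then show False
    using unit_circle_eq_half[of 1] by simp
qed

end

locale pole_frame_function =
  fixes f :: "real \<times> complex \<Rightarrow> real"
  assumes nonneg: "w \<noteq> 0 \<Longrightarrow> 0 \<le> f w"
    and orthogonal_triple: "\<lbrakk>w1 \<noteq> 0; w2 \<noteq> 0; w3 \<noteq> 0; w1 \<bullet> w2 = 0; w1 \<bullet> w3 = 0; w2 \<bullet> w3 = 0\<rbrakk>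
      \<Longrightarrow> f w1 + f w2 + f w3 = 1"
    and pole: "f (1, 0) = 1"
begin

lemma equator:
  assumes "Q \<noteq> 0"
  shows "f (0, Q) = 0"
proof -
  have "f (1, 0) + f (0, Q) + f (0, \<i> * Q) = 1"
    using assms by (intro orthogonal_triple) (auto simp: zero_prod_def inner_complex_def)
  then show ?thesis
    using assms pole nonneg[of "(0, Q)"] nonneg[of "(0, \<i> * Q)"] by (auto simp: zero_prod_def)
qed

lemma polar_triple:
  assumes "Q \<noteq> 0"
  shows "f (1, Q) + f (1, - Q /\<^sub>R (cmod Q)\<^sup>2) = 1"
proof -
  have "(\<i> * Q) \<bullet> Q = 0"
    unfolding inner_complex_def by (simp add: algebra_simps)
  then have "f (1, Q) + f (0, \<i> * Q) + f (1, - Q /\<^sub>R (cmod Q)\<^sup>2) = 1"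
    using assms by (intro orthogonal_triple)
      (auto simp: zero_prod_def power2_norm_eq_inner inner_commute)
  then show ?thesis
    using equator[of "\<i> * Q"] assms by simp
qed

sublocale chart: projective_frame_chart "\<lambda>Q. f (1, Q)"
proof
  fix Q :: complex and t u :: real
  assume tu: "t * u * (cmod Q)\<^sup>2 = 1 + (cmod Q)\<^sup>2"
  then have "Q \<noteq> 0"
    by (auto simp: add_nonneg_eq_0_iff)
  have "f (1, Q * (1 + \<i> * of_real t)) + f (1, Q * (1 - \<i> * of_real u)) + f (1, - Q /\<^sub>R (cmod Q)\<^sup>2) = 1"
  proof (intro orthogonal_triple)
    have "(Q * (1 + \<i> * of_real t)) \<bullet> (Q * (1 - \<i> * of_real u)) = (cmod Q)\<^sup>2 * (1 - t * u)"
      unfolding inner_complex_def cmod_power2 by (simp add: algebra_simps power2_eq_square)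
    then have "(1::real, Q * (1 + \<i> * of_real t)) \<bullet> (1, Q * (1 - \<i> * of_real u)) = 1 + (cmod Q)\<^sup>2 * (1 - t * u)"
      by simp
    also have "\<dots> = 0"
      using tu by (simp add: algebra_simps)
    finally show "(1::real, Q * (1 + \<i> * of_real t)) \<bullet> (1, Q * (1 - \<i> * of_real u)) = 0" .
    have "(Q * (1 + \<i> * of_real t)) \<bullet> Q = (cmod Q)\<^sup>2" "(Q * (1 - \<i> * of_real u)) \<bullet> Q = (cmod Q)\<^sup>2"
      unfolding inner_complex_def cmod_power2 by (simp_all add: algebra_simps power2_eq_square)
    then show "(1::real, Q * (1 + \<i> * of_real t)) \<bullet> (1, - Q /\<^sub>R (cmod Q)\<^sup>2) = 0"
      "(1::real, Q * (1 - \<i> * of_real u)) \<bullet> (1, - Q /\<^sub>R (cmod Q)\<^sup>2) = 0"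
      using \<open>Q \<noteq> 0\<close> by simp_all
  qed (auto simp: zero_prod_def)
  then show "f (1, Q) = f (1, Q * (1 + \<i> * of_real t)) + f (1, Q * (1 - \<i> * of_real u))"
    using polar_triple[OF \<open>Q \<noteq> 0\<close>] by linarith
qed (use nonneg pole polar_triple in \<open>auto simp: zero_prod_def\<close>)

end

lemma orth_sub_sym: "orth_sub z z' \<Longrightarrow> orth_sub z' z"
  unfolding orth_sub_def by (metis inner_commute)

lemma orth_sub_subset: "orth_sub z y \<Longrightarrow> x \<subseteq> y \<Longrightarrow> orth_sub z x"
  unfolding orth_sub_def by blast

lemma orth_sub_Un_right: "orth_sub z (y \<union> y') \<longleftrightarrow> orth_sub z y \<and> orth_sub z y'"
  unfolding orth_sub_def by blast

lemma orth_sub_span_right_iff: "orth_sub z (span S) \<longleftrightarrow> orth_sub z S"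
proof
  assume "orth_sub z S"
  then have "orthogonal u w" if "u \<in> z" "w \<in> span S" for u w
    using that by (intro orthogonal_to_span[of w S u]) (auto simp: orth_sub_def orthogonal_def)
  then show "orth_sub z (span S)"
    by (simp add: orth_sub_def orthogonal_def)
qed (auto simp: orth_sub_def span_base)

lemma orth_sub_span_iff: "orth_sub (span S) (span T) \<longleftrightarrow> (\<forall>s\<in>S. \<forall>t\<in>T. s \<bullet> t = 0)"
proof -
  have "orth_sub (span S) (span T) \<longleftrightarrow> orth_sub T S"
    using orth_sub_span_right_iff orth_sub_sym by metis
  also have "\<dots> \<longleftrightarrow> (\<forall>s\<in>S. \<forall>t\<in>T. s \<bullet> t = 0)"
    unfolding orth_sub_def by (metis inner_commute)
  finally show ?thesis .
qed

lemma exists_max_orth_family_superset: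
  assumes "T \<subseteq> A" and "pairwise orth_sub T"
  obtains M where "T \<subseteq> M" and "max_orth_family A M"
proof -
  define \<C> where "\<C> = {G. T \<subseteq> G \<and> G \<subseteq> A \<and> pairwise orth_sub G}"
  have "\<exists>M\<in>\<C>. \<forall>G\<in>\<C>. M \<subseteq> G \<longrightarrow> G = M"
  proof (rule subset_Zorn_nonempty)
    show "\<C> \<noteq> {}"
      using assms unfolding \<C>_def by blast
  next
    fix Ch
    assume "Ch \<noteq> {}" and "subset.chain \<C> Ch"
    then have "pairwise orth_sub (\<Union>Ch)"
      by (intro pairwise_chain_Union[of Ch]) (auto simp: \<C>_def subset_chain_def chain_subset_def)
    with \<open>Ch \<noteq> {}\<close> \<open>subset.chain \<C> Ch\<close> show "\<Union>Ch \<in> \<C>"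
      unfolding \<C>_def subset_chain_def by blast
  qed
  then obtain M where M: "M \<in> \<C>" and maximal: "\<And>G. G \<in> \<C> \<Longrightarrow> M \<subseteq> G \<Longrightarrow> G = M"
    by blast
  have "max_orth_family A M"
    unfolding max_orth_family_def
  proof (intro conjI)
    show "M \<subseteq> A" and "\<forall>x\<in>M. \<forall>y\<in>M. x \<noteq> y \<longrightarrow> orth_sub x y"
      using M unfolding \<C>_def pairwise_def by auto
    show "\<not> (\<exists>z\<in>A. z \<notin> M \<and> (\<forall>x\<in>M. orth_sub z x))"
    proof
      assume "\<exists>z\<in>A. z \<notin> M \<and> (\<forall>x\<in>M. orth_sub z x)"
      then obtain z where z: "z \<in> A" "z \<notin> M" "\<forall>x\<in>M. orth_sub z x"
        by blast
      then have "insert z M \<in> \<C>"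
        using M unfolding \<C>_def by (auto simp: pairwise_insert intro: orth_sub_sym)
      then show False
        using maximal z(2) by blast
    qed
  qed
  then show ?thesis
    using M that unfolding \<C>_def by blast
qed

lemma exists_unit_orthogonal:
  fixes B :: "'a::real_inner set"
  assumes "finite B" and "pairwise orthogonal B" and "span B \<noteq> UNIV"
  obtains e where "e \<bullet> e = 1" and "\<And>b. b \<in> B \<Longrightarrow> b \<bullet> e = 0"
proof -
  obtain v where v: "v \<notin> span B"
    using assms(3) by auto
  define r where "r = v - (\<Sum>b\<in>B. ((b \<bullet> v) / (b \<bullet> b)) *\<^sub>R b)"
  have r_orth: "b \<bullet> r = 0" if "b \<in> B" for b
  proof -
    have "b \<bullet> (\<Sum>b'\<in>B. ((b' \<bullet> v) / (b' \<bullet> b')) *\<^sub>R b') = (\<Sum>b'\<in>B. ((b' \<bullet> v) / (b' \<bullet> b')) * (b \<bullet> b'))"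
      by (simp add: inner_sum_right)
    also have "\<dots> = (\<Sum>b'\<in>B. if b' = b then ((b \<bullet> v) / (b \<bullet> b)) * (b \<bullet> b) else 0)"
      using assms(2) that by (intro sum.cong) (auto simp: pairwise_def orthogonal_def)
    also have "\<dots> = ((b \<bullet> v) / (b \<bullet> b)) * (b \<bullet> b)"
      using assms(1) that by simp
    also have "\<dots> = b \<bullet> v"
      by simp
    finally show ?thesis
      unfolding r_def by (simp add: inner_diff_right)
  qed
  have "r \<noteq> 0"
    using v span_sum[of B "\<lambda>b. ((b \<bullet> v) / (b \<bullet> b)) *\<^sub>R b"] span_base span_scale
    unfolding r_def by (metis (no_types, lifting) eq_iff_diff_eq_0)
  then have "(r /\<^sub>R norm r) \<bullet> (r /\<^sub>R norm r) = 1"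
    by (simp add: power2_norm_eq_inner[symmetric] power2_eq_square)
  moreover have "b \<bullet> (r /\<^sub>R norm r) = 0" if "b \<in> B" for b
    using r_orth[OF that] by simp
  ultimately show ?thesis
    using that by blast
qed

lemma span_orthogonal_triple_eq_UNIV:
  fixes w1 w2 w3 :: "'a::euclidean_space"
  assumes "DIM('a) = 3"
    and "w1 \<noteq> 0" "w2 \<noteq> 0" "w3 \<noteq> 0" and "w1 \<bullet> w2 = 0" "w1 \<bullet> w3 = 0" "w2 \<bullet> w3 = 0"
  shows "span {w1, w2, w3} = UNIV"
proof -
  have "pairwise orthogonal {w1, w2, w3}"
    using assms by (auto simp: pairwise_def orthogonal_def inner_commute)
  then have "independent {w1, w2, w3}"
    using assms by (intro pairwise_orthogonal_independent) auto
  moreover have "w1 \<noteq> w2" "w1 \<noteq> w3" "w2 \<noteq> w3"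
    using assms by auto
  then have "card {w1, w2, w3} = DIM('a)"
    using assms(1) by simp
  ultimately have "UNIV \<subseteq> span {w1, w2, w3}"
    by (intro card_ge_dim_independent) auto
  then show ?thesis
    by auto
qed

text \<open>\<open>J\<close> is multiplication by \<open>\<i>\<close> on a complex space and by \<open>1\<close> on a real one, and \<open>c\<close> is
  the real part of that scalar.\<close>

locale ray_structure =
  fixes J :: "'a::real_inner \<Rightarrow> 'a" and c :: real
  assumes linear_J: "linear J"
    and J_inner: "J u \<bullet> J v = u \<bullet> v"
    and real_or_complex: "(c = 1 \<and> (\<forall>v. J v = v)) \<or> (c = 0 \<and> (\<forall>v. J (J v) = - v))"
begin

definition atoms :: "'a set set" where
  "atoms = {span {v, J v} | v. v \<noteq> 0}"

lemma inner_J_self: "v \<bullet> J v = c * (v \<bullet> v)"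
proof -
  have "v \<bullet> J v = J v \<bullet> J (J v)"
    by (rule J_inner[symmetric])
  then show ?thesis
    using real_or_complex by (auto simp: inner_commute)
qed

lemma inner_J_swap:
  assumes "u \<bullet> w = 0" and "J u \<bullet> w = 0"
  shows "u \<bullet> J w = 0"
proof -
  have "u \<bullet> J w = J u \<bullet> J (J w)"
    by (rule J_inner[symmetric])
  then show ?thesis
    using real_or_complex assms by auto
qed

lemma J_eq_or_orthogonal: "J v = v \<or> v \<bullet> J v = 0"
  using real_or_complex inner_J_self by auto

lemma J_in_span_pair:
  assumes "u \<in> span {v, J v}"
  shows "J u \<in> span {v, J v}"
proof -
  have "- v \<in> span {v, J v}"
    by (intro span_neg span_base) simp
  then have "J ` {v, J v} \<subseteq> span {v, J v}"
    using real_or_complex by (auto simp: span_base)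
  then have "span (J ` {v, J v}) \<subseteq> span {v, J v}"
    by (simp add: span_minimal)
  moreover have "J u \<in> span (J ` {v, J v})"
    using assms span_linear_image[OF linear_J] by blast
  ultimately show ?thesis
    by blast
qed

lemma span_pair_eq_if_mem:
  assumes "u \<in> span {v, J v}" and "u \<noteq> 0"
  shows "span {u, J u} = span {v, J v}"
proof -
  obtain a b where "u - a *\<^sub>R v = b *\<^sub>R J v"
    using assms(1) by (auto simp: span_breakdown_eq span_singleton)
  then have u: "u = a *\<^sub>R v + b *\<^sub>R J v"
    by (metis add.commute diff_eq_eq)
  have "span {u, J u} \<subseteq> span {v, J v}"
    using assms(1) J_in_span_pair by (simp add: span_minimal)
  moreover have "v \<in> span {u, J u} \<and> J v \<in> span {u, J u}"
    using real_or_complex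
  proof (elim disjE conjE)
    assume "\<forall>v. J v = v"
    then have "u = (a + b) *\<^sub>R v" and "J v = v"
      by (simp_all add: u scaleR_add_left)
    moreover have "a + b \<noteq> 0"
      using assms(2) calculation by auto
    ultimately have "v = (1 / (a + b)) *\<^sub>R u" and "J v = v"
      by simp_all
    then show ?thesis
      by (metis span_scale span_base insertI1)
  next
    assume JJ: "\<forall>v. J (J v) = - v"
    then have Ju: "J u = a *\<^sub>R J v - b *\<^sub>R v"
      using linear_J by (simp add: u linear_add linear_scale)
    define d where "d = a\<^sup>2 + b\<^sup>2"
    have "d \<noteq> 0"
      using assms(2) by (auto simp: d_def u)
    have dv: "d *\<^sub>R v = a *\<^sub>R u - b *\<^sub>R J u" and dJv: "d *\<^sub>R J v = b *\<^sub>R u + a *\<^sub>R J u"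
      unfolding Ju by (simp_all add: u d_def algebra_simps power2_eq_square)
    have "v = (1 / d) *\<^sub>R (a *\<^sub>R u - b *\<^sub>R J u)" and "J v = (1 / d) *\<^sub>R (b *\<^sub>R u + a *\<^sub>R J u)"
      using \<open>d \<noteq> 0\<close> by (simp_all flip: dv dJv)
    then show ?thesis
      by (metis span_add span_diff span_scale span_base insertI1 insertI2)
  qed
  then have "span {v, J v} \<subseteq> span {u, J u}"
    by (simp add: span_minimal)
  ultimately show ?thesis
    by blast
qed

lemma atom_eq_span_pair:
  assumes "z \<in> atoms" and "u \<in> z" and "u \<noteq> 0"
  shows "z = span {u, J u}"
  using assms span_pair_eq_if_mem unfolding atoms_def by blast

lemma atom_unit_generator:
  assumes "z \<in> atoms"
  obtains n where "n \<bullet> n = 1" and "z = span {n, J n}"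
proof -
  obtain v where v: "v \<noteq> 0" "z = span {v, J v}"
    using assms unfolding atoms_def by blast
  define n where "n = v /\<^sub>R norm v"
  have "n \<in> z" "n \<noteq> 0"
    using v by (auto simp: n_def span_base span_scale)
  moreover have "n \<bullet> n = 1"
    using v by (simp add: n_def power2_norm_eq_inner[symmetric] power2_eq_square)
  ultimately show ?thesis
    using that atom_eq_span_pair[OF assms] by blast
qed

lemma orth_sub_span_pair_iff:
  "orth_sub (span {u, J u}) (span {w, J w}) \<longleftrightarrow> u \<bullet> w = 0 \<and> u \<bullet> J w = 0"
  using inner_J_swap[of w u] J_inner[of u w]
  by (auto simp: orth_sub_span_iff inner_commute)

lemma not_orth_sub_self:
  assumes "z \<in> atoms"
  shows "\<not> orth_sub z z"
proof
  assume "orth_sub z z"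
  obtain v where "v \<noteq> 0" "z = span {v, J v}"
    using assms unfolding atoms_def by blast
  then have "v \<in> z"
    by (simp add: span_base)
  with \<open>orth_sub z z\<close> have "v \<bullet> v = 0"
    unfolding orth_sub_def by blast
  with \<open>v \<noteq> 0\<close> show False
    by simp
qed

lemma pairwise_orthogonal_J_pairs:
  assumes "u \<bullet> w = 0" and "u \<bullet> J w = 0"
  shows "pairwise orthogonal {u, J u, w, J w}"
  using assms inner_J_swap[of w u] J_inner[of u w] J_eq_or_orthogonal[of u] J_eq_or_orthogonal[of w]
  by (auto simp: pairwise_insert orthogonal_def inner_commute)

lemma exists_real_phase_vector:
  assumes "y \<in> atoms" and "\<not> orth_sub (span {n, J n}) y"
  obtains w where "w \<in> y" and "w \<bullet> n \<noteq> 0" and "w \<bullet> J n = c * (w \<bullet> n)"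
proof -
  obtain w0 where w0: "w0 \<noteq> 0" "y = span {w0, J w0}"
    using assms(1) unfolding atoms_def by blast
  define a b where "a = w0 \<bullet> n" and "b = w0 \<bullet> J n"
  have "a \<noteq> 0 \<or> b \<noteq> 0"
    using assms(2) inner_J_swap[of n w0]
    unfolding w0(2) orth_sub_span_pair_iff a_def b_def by (auto simp: inner_commute)
  from real_or_complex show ?thesis
  proof (elim disjE conjE)
    assume "c = 1" and "\<forall>v. J v = v"
    then show ?thesis
      using that[of w0] \<open>a \<noteq> 0 \<or> b \<noteq> 0\<close> unfolding a_def b_def w0(2) by (simp add: span_base)
  next
    assume "c = 0" and JJ: "\<forall>v. J (J v) = - v"
    \<comment> \<open>\<open>w = (a - \<i> b) w0\<close> removes the phase of the inner product of \<open>w0\<close> with \<open>n\<close>\<close>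
    define w where "w = a *\<^sub>R w0 - b *\<^sub>R J w0"
    have "J w0 \<bullet> n = - b"
      using J_inner[of w0 "J n"] JJ unfolding b_def by simp
    moreover have "J w0 \<bullet> J n = a"
      using J_inner unfolding a_def by simp
    ultimately have "w \<bullet> n = a\<^sup>2 + b\<^sup>2" and "w \<bullet> J n = 0"
      unfolding w_def by (simp_all add: inner_diff_left a_def[symmetric] b_def[symmetric] power2_eq_square)
    moreover have "w \<in> y"
      unfolding w_def w0(2) by (intro span_diff span_scale span_base) auto
    ultimately show ?thesis
      using that[of w] \<open>c = 0\<close> \<open>a \<noteq> 0 \<or> b \<noteq> 0\<close> by simp
  qed
qed

lemma exists_unit_direction_orth_pair:
  assumes infdim: "\<not> (\<exists>B :: 'a set. finite B \<and> span B = UNIV)"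
    and "v \<bullet> n = 0" and "v \<bullet> J n = 0"
  obtains e where "e \<bullet> e = 1" and "e \<bullet> n = 0" and "e \<bullet> J n = 0" and "v = norm v *\<^sub>R e"
proof (cases "v = 0")
  case True
  have orth: "pairwise orthogonal {n, J n}"
    using J_eq_or_orthogonal[of n] by (auto simp: pairwise_def orthogonal_def inner_commute)
  have span: "span {n, J n} \<noteq> UNIV"
    using infdim by (metis finite.emptyI finite.insertI)
  obtain e where e: "e \<bullet> e = 1" "\<And>b. b \<in> {n, J n} \<Longrightarrow> b \<bullet> e = 0"
    by (rule exists_unit_orthogonal[OF _ orth span]) simp_all
  have "e \<bullet> n = 0" "e \<bullet> J n = 0"
    using e(2)[of n] e(2)[of "J n"] by (simp_all add: inner_commute)
  then show ?thesis
    using that[of e] e(1) True by simp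
next
  case False
  define e where "e = (1 / norm v) *\<^sub>R v"
  have "e \<bullet> e = 1"
    using False by (simp add: e_def power2_norm_eq_inner[symmetric] power2_eq_square)
  moreover have "e \<bullet> n = 0" "e \<bullet> J n = 0" "v = norm v *\<^sub>R e"
    using False assms(2,3) by (simp_all add: e_def)
  ultimately show ?thesis
    by (rule that)
qed

end

text \<open>An isometric copy of \<open>\<real> \<times> \<complex> \<cong> \<real>\<^sup>3\<close> on which the scalar-valued inner product is real;
  orthogonal lines of it therefore generate orthogonal atoms.\<close>

locale totally_real_embedding = ray_structure +
  fixes emb :: "real \<times> complex \<Rightarrow> 'a"
  assumes linear_emb: "linear emb"
    and emb_inner: "emb w \<bullet> emb w' = w \<bullet> w'"
    and emb_inner_J: "emb w \<bullet> J (emb w') = c * (w \<bullet> w')"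
begin

definition line_atom :: "real \<times> complex \<Rightarrow> 'a set" where
  "line_atom w = span {emb w, J (emb w)}"

lemma emb_eq_0_iff [simp]: "emb w = 0 \<longleftrightarrow> w = 0"
  using emb_inner[of w w] by auto

lemma line_atom_in_atoms: "w \<noteq> 0 \<Longrightarrow> line_atom w \<in> atoms"
  unfolding line_atom_def atoms_def by auto

lemma orth_sub_line_atom: "w \<bullet> w' = 0 \<Longrightarrow> orth_sub (line_atom w) (line_atom w')"
  unfolding line_atom_def orth_sub_span_pair_iff by (simp add: emb_inner emb_inner_J)

lemma line_atom_subset_span_triple:
  assumes "span {w1, w2, w3} = UNIV"
  shows "line_atom w \<subseteq> span (line_atom w1 \<union> line_atom w2 \<union> line_atom w3)"
proof -
  let ?S = "line_atom w1 \<union> line_atom w2 \<union> line_atom w3"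
  have "emb ` {w1, w2, w3} \<subseteq> span ?S" and "J ` emb ` {w1, w2, w3} \<subseteq> span ?S"
    unfolding line_atom_def by (auto intro!: span_base span_superset)
  then have "span (emb ` {w1, w2, w3}) \<subseteq> span ?S" and "span (J ` emb ` {w1, w2, w3}) \<subseteq> span ?S"
    by (simp_all add: span_minimal)
  moreover have "emb w \<in> span (emb ` {w1, w2, w3})"
    using span_linear_image[OF linear_emb, of "{w1, w2, w3}"] assms by blast
  moreover have "J (emb w) \<in> span (J ` emb ` {w1, w2, w3})"
    using span_linear_image[OF linear_compose[OF linear_emb linear_J], of "{w1, w2, w3}"] assms
    by (auto simp: image_comp)
  ultimately have "{emb w, J (emb w)} \<subseteq> span ?S"
    by blast
  then show ?thesis
    unfolding line_atom_def[of w] by (simp add: span_minimal)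
qed

lemma orth_sub_line_atom_if_spanning:
  assumes "span {w1, w2, w3} = UNIV"
    and "orth_sub z (line_atom w1)" "orth_sub z (line_atom w2)" "orth_sub z (line_atom w3)"
  shows "orth_sub z (line_atom w)"
proof -
  have "orth_sub z (span (line_atom w1 \<union> line_atom w2 \<union> line_atom w3))"
    using assms(2-4) by (simp add: orth_sub_span_right_iff orth_sub_Un_right)
  then show ?thesis
    using line_atom_subset_span_triple[OF assms(1)] by (rule orth_sub_subset)
qed

end

context ray_structure
begin

lemma totally_real_embedding_of_frame:
  assumes orthonormal: "n \<bullet> n = 1" "e \<bullet> e = 1" "f \<bullet> f = 1" "n \<bullet> e = 0" "n \<bullet> f = 0" "e \<bullet> f = 0"
    and totally_real: "n \<bullet> J e = 0" "n \<bullet> J f = 0" "e \<bullet> J f = 0" "e \<bullet> J n = 0" "f \<bullet> J n = 0" "f \<bullet> J e = 0"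
  shows "totally_real_embedding J c (\<lambda>w. fst w *\<^sub>R n + Re (snd w) *\<^sub>R e + Im (snd w) *\<^sub>R f)"
    (is "totally_real_embedding J c ?emb")
proof (intro totally_real_embedding.intro ray_structure_axioms totally_real_embedding_axioms.intro)
  have diagonal: "n \<bullet> J n = c" "e \<bullet> J e = c" "f \<bullet> J f = c"
    using orthonormal inner_J_self by simp_all
  have J_emb: "J (?emb w) = fst w *\<^sub>R J n + Re (snd w) *\<^sub>R J e + Im (snd w) *\<^sub>R J f" for w
    using linear_J by (simp add: linear_add linear_scale)
  show "linear ?emb"
    by (intro linearI) (auto simp: algebra_simps)
  show "?emb w \<bullet> ?emb w' = w \<bullet> w'" for w w'
    using orthonormal
    by (simp add: inner_add_left inner_add_right inner_commute[of e n] inner_commute[of f n]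
        inner_commute[of f e] inner_prod_def inner_complex_def)
  show "?emb w \<bullet> J (?emb w') = c * (w \<bullet> w')" for w w'
    using totally_real diagonal unfolding J_emb
    by (simp add: inner_prod_def inner_complex_def algebra_simps)
qed

lemma exists_totally_real_embedding:
  assumes infdim: "\<not> (\<exists>B :: 'a set. finite B \<and> span B = UNIV)"
    and n: "n \<bullet> n = 1" and e: "e \<bullet> e = 1" "e \<bullet> n = 0" "e \<bullet> J n = 0"
  obtains emb where "totally_real_embedding J c emb" and "emb (1, 0) = n" and "emb (0, 1) = e"
proof -
  have ne: "n \<bullet> e = 0" "n \<bullet> J e = 0"
    using e(2,3) inner_J_swap[of n e] by (simp_all add: inner_commute)
  then have orth: "pairwise orthogonal {n, J n, e, J e}"
    by (rule pairwise_orthogonal_J_pairs)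
  have span: "span {n, J n, e, J e} \<noteq> UNIV"
    using infdim by (metis finite.emptyI finite.insertI)
  obtain f where f: "f \<bullet> f = 1" "\<And>b. b \<in> {n, J n, e, J e} \<Longrightarrow> b \<bullet> f = 0"
    by (rule exists_unit_orthogonal[OF _ orth span]) simp_all
  then have f_orth: "n \<bullet> f = 0" "J n \<bullet> f = 0" "e \<bullet> f = 0" "J e \<bullet> f = 0"
    by simp_all
  have "totally_real_embedding J c (\<lambda>w. fst w *\<^sub>R n + Re (snd w) *\<^sub>R e + Im (snd w) *\<^sub>R f)"
    using n e f_orth ne f(1) inner_J_swap[of n f] inner_J_swap[of e f]
    by (intro totally_real_embedding_of_frame) (simp_all add: inner_commute)
  then show ?thesis
    by (rule that) simp_all
qed

end

locale atom_state = ray_structure +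
  fixes P :: "'a set \<Rightarrow> real" and x :: "'a set"
  assumes state: "is_state atoms P" and x_atom: "x \<in> atoms" and P_x: "P x = 1"
begin

lemma P_nonneg: "z \<in> atoms \<Longrightarrow> 0 \<le> P z"
  using state unfolding is_state_def by blast

lemma has_sum_max_orth_family: "max_orth_family atoms M \<Longrightarrow> (P has_sum 1) M"
  using state unfolding is_state_def by blast

lemma zero_if_orth:
  assumes z: "z \<in> atoms" and orth: "orth_sub z x"
  shows "P z = 0"
proof -
  have "z \<noteq> x"
    using z orth not_orth_sub_self by blast
  have "{x, z} \<subseteq> atoms"
    using z x_atom by simp
  moreover have "pairwise orth_sub {x, z}"
    using orth orth_sub_sym[OF orth] by (simp add: pairwise_insert)
  ultimately obtain M where M: "{x, z} \<subseteq> M" "max_orth_family atoms M"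
    by (rule exists_max_orth_family_superset)
  have "M \<subseteq> atoms"
    using M(2) unfolding max_orth_family_def by blast
  have "sum P {x, z} \<le> 1"
    by (rule has_sum_mono_neutral[OF has_sum_finite has_sum_max_orth_family[OF M(2)]])
      (use M(1) \<open>M \<subseteq> atoms\<close> P_nonneg in auto)
  then show ?thesis
    using \<open>z \<noteq> x\<close> P_x P_nonneg[OF z] by simp
qed

lemma sum_eq_one_if_complement_orth:
  assumes T: "T \<subseteq> atoms" "finite T" "pairwise orth_sub T"
    and complete: "\<And>z. z \<in> atoms \<Longrightarrow> \<forall>t\<in>T. orth_sub z t \<Longrightarrow> orth_sub z x"
  shows "sum P T = 1"
proof -
  obtain M where M: "T \<subseteq> M" "max_orth_family atoms M"
    using T(1,3) by (rule exists_max_orth_family_superset)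
  have "M \<subseteq> atoms" and "pairwise orth_sub M"
    using M(2) unfolding max_orth_family_def pairwise_def by blast+
  have zero: "P z = 0" if "z \<in> M - T" for z
  proof -
    have "z \<in> M" "z \<notin> T"
      using that by simp_all
    then have "z \<in> atoms"
      using \<open>M \<subseteq> atoms\<close> by (simp add: subset_iff)
    moreover have "\<forall>t\<in>T. orth_sub z t"
    proof
      fix t
      assume "t \<in> T"
      with M(1) \<open>z \<notin> T\<close> have "t \<in> M" "z \<noteq> t"
        by auto
      with \<open>z \<in> M\<close> \<open>pairwise orth_sub M\<close> show "orth_sub z t"
        by (simp add: pairwise_def)
    qed
    ultimately show ?thesis
      by (intro zero_if_orth complete)
  qed
  have "(P has_sum 1) T \<longleftrightarrow> (P has_sum 1) M"
  proof (rule has_sum_cong_neutral)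
    show "P z = 0" if "z \<in> T - M" for z
      using that M(1) by auto
  qed (simp_all add: zero)
  then have "(P has_sum 1) T"
    using has_sum_max_orth_family[OF M(2)] by blast
  with has_sum_finite[OF T(2)] show ?thesis
    by (rule has_sum_unique)
qed

end

locale atom_state_frame = atom_state + totally_real_embedding +
  assumes x_eq: "x = line_atom (1, 0)"
begin

sublocale frame: pole_frame_function "\<lambda>w. P (line_atom w)"
proof
  show "w \<noteq> 0 \<Longrightarrow> 0 \<le> P (line_atom w)" for w
    by (intro P_nonneg line_atom_in_atoms)
  show "P (line_atom (1, 0)) = 1"
    using P_x x_eq by simp
next
  fix w1 w2 w3 :: "real \<times> complex"
  assume nonzero: "w1 \<noteq> 0" "w2 \<noteq> 0" "w3 \<noteq> 0" and orth: "w1 \<bullet> w2 = 0" "w1 \<bullet> w3 = 0" "w2 \<bullet> w3 = 0"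
  let ?T = "{line_atom w1, line_atom w2, line_atom w3}"
  have o: "orth_sub (line_atom w1) (line_atom w2)" "orth_sub (line_atom w1) (line_atom w3)"
    "orth_sub (line_atom w2) (line_atom w3)"
    using orth by (simp_all add: orth_sub_line_atom)
  then have orth_T: "pairwise orth_sub ?T"
    using o[THEN orth_sub_sym] unfolding pairwise_def by simp
  have self: "\<not> orth_sub (line_atom w) (line_atom w)" if "w \<noteq> 0" for w
    by (rule not_orth_sub_self[OF line_atom_in_atoms[OF that]])
  have "line_atom w1 \<noteq> line_atom w2" "line_atom w1 \<noteq> line_atom w3" "line_atom w2 \<noteq> line_atom w3"
    using o self[OF nonzero(2)] self[OF nonzero(3)] by (metis (no_types))+
  moreover have "sum P ?T = 1"
  proof (rule sum_eq_one_if_complement_orth)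
    show "?T \<subseteq> atoms"
      using nonzero by (simp add: line_atom_in_atoms)
    have "span {w1, w2, w3} = UNIV"
      by (rule span_orthogonal_triple_eq_UNIV) (use nonzero orth in simp_all)
    then show "orth_sub z x" if "\<forall>t\<in>?T. orth_sub z t" for z
      unfolding x_eq by (rule orth_sub_line_atom_if_spanning) (use that in simp_all)
  qed (use orth_T in simp_all)
  ultimately show "P (line_atom w1) + P (line_atom w2) + P (line_atom w3) = 1"
    by (simp add: add.assoc)
qed

end

context atom_state
begin

lemma atom_state_frameI:
  assumes "totally_real_embedding J c emb" and "x = span {emb (1, 0), J (emb (1, 0))}"
  shows "atom_state_frame J c P x emb"
  using assms atom_state_axioms
  by (intro atom_state_frame.intro atom_state_frame_axioms.intro)
    (simp_all add: totally_real_embedding.line_atom_def)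

lemma P_pos_if_not_orth:
  assumes infdim: "\<not> (\<exists>B :: 'a set. finite B \<and> span B = UNIV)"
    and y: "y \<in> atoms" and not_orth: "\<not> orth_sub x y"
  shows "0 < P y"
proof -
  obtain n where n: "n \<bullet> n = 1" and x_eq: "x = span {n, J n}"
    using atom_unit_generator[OF x_atom] by blast
  obtain w where w: "w \<in> y" "w \<bullet> n \<noteq> 0" "w \<bullet> J n = c * (w \<bullet> n)"
    using exists_real_phase_vector[OF y not_orth[unfolded x_eq]] by blast
  define \<alpha> where "\<alpha> = w \<bullet> n"
  define v where "v = w - \<alpha> *\<^sub>R n"
  have "v \<bullet> n = 0" "v \<bullet> J n = 0"
    using n w(3) inner_J_self[of n] unfolding v_def \<alpha>_def by (simp_all add: inner_diff_left)
  then obtain e where e: "e \<bullet> e = 1" "e \<bullet> n = 0" "e \<bullet> J n = 0" and v: "v = norm v *\<^sub>R e"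
    by (rule exists_unit_direction_orth_pair[OF infdim])
  obtain emb where emb: "totally_real_embedding J c emb" "emb (1, 0) = n" "emb (0, 1) = e"
    using exists_totally_real_embedding[OF infdim n e] by blast
  interpret atom_state_frame J c P x emb
    by (rule atom_state_frameI) (simp_all add: emb x_eq)
  define r where "r = norm v / \<alpha>"
  have "emb (1, of_real r) = emb ((1, 0) + r *\<^sub>R (0, 1))"
    by (simp add: scaleR_conv_of_real)
  also have "\<dots> = n + r *\<^sub>R e"
    using emb(2,3) by (simp only: linear_add[OF linear_emb] linear_scale[OF linear_emb])
  also have "\<dots> = (1 / \<alpha>) *\<^sub>R (\<alpha> *\<^sub>R n + norm v *\<^sub>R e)"
    using w(2) unfolding r_def \<alpha>_def by (simp add: scaleR_add_right)
  also have "\<dots> = (1 / \<alpha>) *\<^sub>R w"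
    by (simp only: v[symmetric]) (simp add: v_def)
  finally have "emb (1, of_real r) = (1 / \<alpha>) *\<^sub>R w" .
  moreover have "subspace y"
    using y unfolding atoms_def by auto
  ultimately have "emb (1, of_real r) \<in> y"
    using w(1) by (simp add: subspace_scale)
  then have "y = line_atom (1, of_real r)"
    unfolding line_atom_def by (intro atom_eq_span_pair[OF y]) (simp_all add: zero_prod_def)
  then show ?thesis
    using frame.chart.positive[of "of_real r"] by simp
qed

lemma exists_half_atom_in_join:
  assumes infdim: "\<not> (\<exists>B :: 'a set. finite B \<and> span B = UNIV)"
    and y: "y \<in> atoms" and orth: "orth_sub x y"
  shows "\<exists>z\<in>atoms. z \<subseteq> join_sub x y \<and> P z = 1 / 2"
proof -
  obtain n where n: "n \<bullet> n = 1" and x_eq: "x = span {n, J n}"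
    using atom_unit_generator[OF x_atom] by blast
  obtain e where e: "e \<bullet> e = 1" and y_eq: "y = span {e, J e}"
    using atom_unit_generator[OF y] by blast
  have in_x: "n \<in> x" "J n \<in> x" and in_y: "e \<in> y" "J e \<in> y"
    unfolding x_eq y_eq by (simp_all add: span_base)
  then have "n \<bullet> e = 0" "J n \<bullet> e = 0"
    using orth unfolding orth_sub_def by blast+
  then have "e \<bullet> n = 0" "e \<bullet> J n = 0"
    by (simp_all add: inner_commute)
  then obtain emb where emb: "totally_real_embedding J c emb" "emb (1, 0) = n" "emb (0, 1) = e"
    using exists_totally_real_embedding[OF infdim n e] by blast
  interpret atom_state_frame J c P x emb
    by (rule atom_state_frameI) (simp_all add: emb x_eq)
  have "emb (1, 1) = n + e"
    using linear_emb emb(2,3) linear_add[of emb "(1, 0)" "(0, 1)"] by simp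
  moreover have "n + e \<in> span (x \<union> y)" "J n + J e \<in> span (x \<union> y)"
    using in_x in_y by (simp_all add: span_add span_base)
  ultimately have "{emb (1, 1), J (emb (1, 1))} \<subseteq> span (x \<union> y)"
    by (simp add: linear_add[OF linear_J])
  then have "line_atom (1, 1) \<subseteq> span (x \<union> y)"
    unfolding line_atom_def by (simp add: span_minimal)
  then have "line_atom (1, 1) \<subseteq> join_sub x y"
    unfolding join_sub_def using closure_subset by blast
  moreover have "P (line_atom (1, 1)) = 1 / 2"
    using frame.chart.unit_circle_eq_half[of 1] by simp
  moreover have "line_atom (1, 1) \<in> atoms"
    by (rule line_atom_in_atoms) (simp add: zero_prod_def)
  ultimately show ?thesis
    by (intro bexI[of _ "line_atom (1, 1)"] conjI)
qed

end

lemma ray_structure_real: "ray_structure (\<lambda>v. v) 1"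
  by (intro ray_structure.intro) (simp_all add: linear_ident)

lemma ray_structure_atoms_real: "ray_structure.atoms (\<lambda>v. v) = real_atoms"
  by (simp add: ray_structure.atoms_def[OF ray_structure_real] real_atoms_def)

lemma ray_structure_complex:
  assumes "complex_structure J"
  shows "ray_structure J 0"
  using assms unfolding complex_structure_def by (intro ray_structure.intro) simp_all

lemma ray_structure_atoms_complex: "complex_structure J \<Longrightarrow> ray_structure.atoms J = complex_atoms J"
  by (simp add: ray_structure.atoms_def[OF ray_structure_complex] complex_atoms_def)

lemma ray_structure_of_real_or_complex_atoms:
  assumes "A = real_atoms \<or> (\<exists>J. complex_structure J \<and> A = complex_atoms J)"
  obtains J c where "ray_structure J c" and "A = ray_structure.atoms J"
  using assms
proof
  assume "A = real_atoms"
  then show thesis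
    by (intro that[OF ray_structure_real]) (simp add: ray_structure_atoms_real)
next
  assume "\<exists>J. complex_structure J \<and> A = complex_atoms J"
  then obtain J where J: "complex_structure J" and "A = complex_atoms J"
    by blast
  then show thesis
    by (intro that[OF ray_structure_complex[OF J]]) (simp add: ray_structure_atoms_complex[OF J])
qed

theorem mainTheorem6:
  fixes A :: "'a::{real_inner, complete_space} set set"
    and P :: "'a set \<Rightarrow> real"
    and x y :: "'a set"
  assumes field: "A = real_atoms \<or> (\<exists>J. complex_structure J \<and> A = complex_atoms J)"
    and sep: "separable_space (euclidean :: 'a topology)"
    and infdim: "\<not> (\<exists>B :: 'a set. finite B \<and> span B = UNIV)"
    and state: "is_state A P"
    and x: "x \<in> A" and y: "y \<in> A"
    and Px: "P x = 1" and Py: "P y = 0"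
  shows "orth_sub x y \<and> (\<exists>z\<in>A. z \<subseteq> join_sub x y \<and> P z = 1 / 2)"
proof -
  obtain J c where "ray_structure J c" and A: "A = ray_structure.atoms J"
    using field by (rule ray_structure_of_real_or_complex_atoms)
  then interpret atom_state J c P x
    using state x Px by (intro atom_state.intro atom_state_axioms.intro) (simp_all add: A)
  have y_atom: "y \<in> atoms"
    using y A by simp
  have "orth_sub x y"
  proof (rule ccontr)
    assume "\<not> orth_sub x y"
    with P_pos_if_not_orth[OF infdim y_atom] Py show False
      by simp
  qed
  with exists_half_atom_in_join[OF infdim y_atom] show ?thesis
    using A by simp
qed

end
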